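(* Let $Q\in\mathbb{R}^{n\times n}$ be symmetric positive definite with $Q_{i,i}=1$ for all $i$, whose support graph is a connected tree, and let $c,\lambda\in\mathbb{R}^n$ with $\lambda_i>0$. Then for every node $u$ and every $\alpha\in\mathbb{R}$, $$f_u(\alpha)=\tfrac12 Q_{u,u}\alpha^2+c_u\alpha+\lambda_u\mathbb{1}_\alpha-\sum_{v\in\mathrm{par}(u)}f_v^*(-Q_{u,v}\alpha),$$ where $f_v^*(\beta)=\sup_{\xi\in\mathbb{R}}\{\beta\xi-f_v(\xi)\}$ (with the empty sum equal to $0$ when $u$ is a leaf).
   Context: The support graph of $Q$ is the undirected graph on $\{1,\dots,n\}$ with edge $\{i,j\}$ ($i\ne j$) iff $Q_{i,j}\ne0$. The tree is rooted at $n$ with topological labeling: each non-root node $u$ has a unique neighbor $\mathrm{child}(u)$ on its path to the root, with $u<\mathrm{child}(u)$; $\mathrm{par}(u)=\{v:\mathrm{child}(v)=u\}$. $\mathrm{supp}_u(Q)$ is the subtree of $u$ and all nodes whose path to the root passes through $u$; $n_u$ is its size; $Q_{[u]},c_{[u]},\lambda_{[u]}$ are the restrictions to its nodes. $\mathbb{1}_\alpha=0$ if $\alpha=0$ and $1$ otherwise. The parametric cost is $f_u(\alpha)=\min\{\tfrac12x^\top Q_{[u]}x+c_{[u]}^\top x+\lambda_{[u]}^\top z : x\in\mathbb{R}^{n_u}, z\in\{0,1\}^{n_u}, x_i(1-z_i)=0\ \forall i, x_u=\alpha\}$, where $x_u$ is the coordinate corresponding to node $u$. *)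

theory Defs
  imports Complex_Main
begin

text \<open>Nodes are labelled 1..n. Matrices and vectors are functions on nat, only
  their values on indices in 1..n matter.\<close>

definition nodes :: "nat \<Rightarrow> nat set" where
  "nodes n = {1..n}"

definition sadj :: "(nat \<Rightarrow> nat \<Rightarrow> real) \<Rightarrow> nat \<Rightarrow> nat \<Rightarrow> nat \<Rightarrow> bool" where
  "sadj Q n i j \<longleftrightarrow> i \<in> nodes n \<and> j \<in> nodes n \<and> i \<noteq> j \<and> Q i j \<noteq> 0"

definition sedges :: "(nat \<Rightarrow> nat \<Rightarrow> real) \<Rightarrow> nat \<Rightarrow> nat set set" where
  "sedges Q n = {{i, j} | i j. sadj Q n i j}"

definition reach_in :: "(nat \<Rightarrow> nat \<Rightarrow> real) \<Rightarrow> nat \<Rightarrow> nat set \<Rightarrow> nat \<Rightarrow> nat \<Rightarrow> bool" where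
  "reach_in Q n S a b \<longleftrightarrow> (\<lambda>x y. x \<in> S \<and> y \<in> S \<and> sadj Q n x y)\<^sup>*\<^sup>* a b"

definition connected_support :: "(nat \<Rightarrow> nat \<Rightarrow> real) \<Rightarrow> nat \<Rightarrow> bool" where
  "connected_support Q n \<longleftrightarrow> (\<forall>a\<in>nodes n. \<forall>b\<in>nodes n. reach_in Q n (nodes n) a b)"

definition support_is_tree :: "(nat \<Rightarrow> nat \<Rightarrow> real) \<Rightarrow> nat \<Rightarrow> bool" where
  "support_is_tree Q n \<longleftrightarrow> connected_support Q n \<and> card (sedges Q n) = n - 1"

text \<open>child(u): the neighbour of u on its path to the root n, i.e. the neighbour v
  that is the root or is connected to the root without passing through u.\<close>
definition child :: "(nat \<Rightarrow> nat \<Rightarrow> real) \<Rightarrow> nat \<Rightarrow> nat \<Rightarrow> nat" where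
  "child Q n u = (THE v. sadj Q n u v \<and> (v = n \<or> reach_in Q n (nodes n - {u}) v n))"

definition topological_labeling :: "(nat \<Rightarrow> nat \<Rightarrow> real) \<Rightarrow> nat \<Rightarrow> bool" where
  "topological_labeling Q n \<longleftrightarrow> (\<forall>u\<in>nodes n. u \<noteq> n \<longrightarrow> u < child Q n u)"

definition par :: "(nat \<Rightarrow> nat \<Rightarrow> real) \<Rightarrow> nat \<Rightarrow> nat \<Rightarrow> nat set" where
  "par Q n u = {v \<in> nodes n. v \<noteq> n \<and> child Q n v = u}"

definition supp :: "(nat \<Rightarrow> nat \<Rightarrow> real) \<Rightarrow> nat \<Rightarrow> nat \<Rightarrow> nat set" where
  "supp Q n u = {w \<in> nodes n.
     (\<lambda>a b. a \<in> nodes n \<and> a \<noteq> n \<and> b = child Q n a)\<^sup>*\<^sup>* w u}"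

definition indic :: "real \<Rightarrow> real" where
  "indic \<alpha> = (if \<alpha> = 0 then 0 else 1)"

text \<open>Parametric cost f_u(alpha) (the minimum, written as an infimum; it is attained).\<close>
definition fcost :: "(nat \<Rightarrow> nat \<Rightarrow> real) \<Rightarrow> (nat \<Rightarrow> real) \<Rightarrow> (nat \<Rightarrow> real) \<Rightarrow> nat
    \<Rightarrow> nat \<Rightarrow> real \<Rightarrow> real" where
  "fcost Q c lam n u \<alpha> = Inf
     {(1/2) * (\<Sum>i\<in>supp Q n u. \<Sum>j\<in>supp Q n u. x i * Q i j * x j)
        + (\<Sum>i\<in>supp Q n u. c i * x i) + (\<Sum>i\<in>supp Q n u. lam i * z i)
      | x z. (\<forall>i\<in>supp Q n u. z i \<in> {0, 1} \<and> x i * (1 - z i) = 0) \<and> x u = \<alpha>}"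

definition fconj :: "(nat \<Rightarrow> nat \<Rightarrow> real) \<Rightarrow> (nat \<Rightarrow> real) \<Rightarrow> (nat \<Rightarrow> real) \<Rightarrow> nat
    \<Rightarrow> nat \<Rightarrow> real \<Rightarrow> real" where
  "fconj Q c lam n v \<beta> = (SUP \<xi>. \<beta> * \<xi> - fcost Q c lam n v \<xi>)"

end

theory Submission
  imports Defs
begin

text \<open>
  The subtree of \<open>u\<close> consists of \<open>u\<close> and the pairwise disjoint subtrees of its parents, and \<open>Q\<close>
  couples these pieces only through the entries \<open>Q u v\<close>, \<open>v \<in> par(u)\<close>. With \<open>x u = \<alpha>\<close> fixed, the
  cost therefore separates into the terms at \<open>u\<close> plus, for every parent \<open>v\<close>, an independent problem
  of minimising \<open>Q u v * \<alpha> * x v\<close> plus the cost on the subtree of \<open>v\<close>. Minimising first over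
  \<open>x v = \<xi>\<close> shows that its value is \<open>inf\<^sub>\<xi> (Q u v * \<alpha> * \<xi> + f\<^sub>v \<xi>) = - f\<^sub>v\<^sup>* (- Q u v * \<alpha>)\<close>.
  Positive definiteness bounds all these problems from below (by induction via Schur complements),
  which is what makes the infima finite and lets them be split and exchanged.
\<close>

section \<open>Positive definite quadratic forms\<close>

definition quad_form :: "('a \<Rightarrow> 'a \<Rightarrow> real) \<Rightarrow> 'a set \<Rightarrow> ('a \<Rightarrow> real) \<Rightarrow> real" where
  "quad_form A S x = (\<Sum>i\<in>S. \<Sum>j\<in>S. x i * A i j * x j)"

definition symmetric_on :: "('a \<Rightarrow> 'a \<Rightarrow> real) \<Rightarrow> 'a set \<Rightarrow> bool" where
  "symmetric_on A S \<longleftrightarrow> (\<forall>i\<in>S. \<forall>j\<in>S. A i j = A j i)"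

definition pos_def_on :: "('a \<Rightarrow> 'a \<Rightarrow> real) \<Rightarrow> 'a set \<Rightarrow> bool" where
  "pos_def_on A S \<longleftrightarrow> (\<forall>x. (\<exists>i\<in>S. x i \<noteq> 0) \<longrightarrow> 0 < quad_form A S x)"

definition schur_complement :: "('a \<Rightarrow> 'a \<Rightarrow> real) \<Rightarrow> 'a \<Rightarrow> 'a \<Rightarrow> 'a \<Rightarrow> real" where
  "schur_complement A k i j = A i j - A i k * A k j / A k k"

lemma quad_form_cong: "\<forall>i\<in>S. x i = y i \<Longrightarrow> quad_form A S x = quad_form A S y"
  unfolding quad_form_def by (intro sum.cong) auto

lemma pos_def_on_diag_pos:
  assumes "pos_def_on A S" "finite S" "k \<in> S"
  shows "0 < A k k"
proof -
  define e where "e i = (if i = k then 1 else 0 :: real)" for i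
  have "quad_form A S e = A k k"
    using assms(2,3) unfolding quad_form_def e_def
    by (simp add: if_distrib[of "(*) _"] mult.commute[of "if _ then _ else _"] cong: if_cong)
  moreover have "0 < quad_form A S e"
    using assms(1,3) unfolding pos_def_on_def e_def by auto
  ultimately show ?thesis by simp
qed

lemma pos_def_on_subset:
  assumes "pos_def_on A V" "finite V" "S \<subseteq> V"
  shows "pos_def_on A S"
  unfolding pos_def_on_def
proof (intro allI impI)
  fix x :: "_ \<Rightarrow> real" assume "\<exists>i\<in>S. x i \<noteq> 0"
  define y where "y i = (if i \<in> S then x i else 0)" for i
  have "\<exists>i\<in>V. y i \<noteq> 0"
    using assms(3) \<open>\<exists>i\<in>S. x i \<noteq> 0\<close> unfolding y_def by auto
  then have "0 < quad_form A V y"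
    using assms(1) unfolding pos_def_on_def by blast
  also have "quad_form A V y = quad_form A S y"
  proof -
    have "(\<Sum>i\<in>V. \<Sum>j\<in>V. y i * A i j * y j) = (\<Sum>i\<in>S. \<Sum>j\<in>V. y i * A i j * y j)"
      using assms(2,3) by (intro sum.mono_neutral_right) (auto simp: y_def)
    also have "\<dots> = (\<Sum>i\<in>S. \<Sum>j\<in>S. y i * A i j * y j)"
      using assms(2,3) by (intro sum.cong refl sum.mono_neutral_right) (auto simp: y_def)
    finally show ?thesis unfolding quad_form_def .
  qed
  also have "\<dots> = quad_form A S x"
    by (rule quad_form_cong) (simp add: y_def)
  finally show "0 < quad_form A S x" .
qed

lemma symmetric_on_schur_complement:
  assumes "symmetric_on A (insert k S)"
  shows "symmetric_on (schur_complement A k) S"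
  unfolding symmetric_on_def schur_complement_def
proof (intro ballI)
  fix i j assume "i \<in> S" "j \<in> S"
  then have "A i j = A j i" "A i k = A k i" "A k j = A j k"
    using assms unfolding symmetric_on_def by blast+
  then show "A i j - A i k * A k j / A k k = A j i - A j k * A k i / A k k"
    by (metis mult.commute)
qed

lemma quad_form_insert_schur:
  assumes fin: "finite S" and k: "k \<notin> S" and sym: "symmetric_on A (insert k S)"
    and nz: "A k k \<noteq> 0"
  shows "quad_form A (insert k S) x
    = A k k * (x k + (\<Sum>j\<in>S. A k j * x j) / A k k)^2 + quad_form (schur_complement A k) S x"
proof -
  define L where "L = (\<Sum>j\<in>S. A k j * x j)"
  have symk: "A j k = A k j" if "j \<in> S" for j
    using sym that unfolding symmetric_on_def by blast
  have col: "(\<Sum>i\<in>S. x i * A i k * x k) = x k * L"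
    unfolding L_def sum_distrib_left by (rule sum.cong) (auto simp: symk)
  have row: "(\<Sum>j\<in>S. x k * A k j * x j) = x k * L"
    unfolding L_def sum_distrib_left by (rule sum.cong) auto
  have outer: "(\<Sum>i\<in>S. \<Sum>j\<in>S. x i * (A i k * A k j / A k k) * x j) = L * L / A k k"
    unfolding L_def sum_product sum_divide_distrib by (intro sum.cong refl) (simp add: symk mult_ac)
  have "quad_form A (insert k S) x = x k * A k k * x k + x k * L + x k * L + quad_form A S x"
    using fin k by (simp add: quad_form_def sum.distrib col row)
  also have "quad_form A S x = quad_form (schur_complement A k) S x + L * L / A k k"
    unfolding quad_form_def schur_complement_def outer[symmetric]
    by (simp add: algebra_simps sum_subtractf)
  also have "x k * A k k * x k + x k * L + x k * L = A k k * (x k + L / A k k)^2 - L * L / A k k"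
    using nz by (simp add: power2_eq_square field_simps)
  finally show ?thesis
    unfolding L_def[symmetric] by simp
qed

lemma pos_def_on_schur_complement:
  assumes fin: "finite S" and k: "k \<notin> S" and sym: "symmetric_on A (insert k S)"
    and pd: "pos_def_on A (insert k S)"
  shows "pos_def_on (schur_complement A k) S"
  unfolding pos_def_on_def
proof (intro allI impI)
  fix x :: "_ \<Rightarrow> real" assume nz: "\<exists>i\<in>S. x i \<noteq> 0"
  have akk: "0 < A k k"
    using pos_def_on_diag_pos[OF pd] fin by simp
  \<comment> \<open>choose the coordinate at \<open>k\<close> so that the square in the decomposition vanishes\<close>
  define y where "y = x(k := - (\<Sum>j\<in>S. A k j * x j) / A k k)"
  have yS: "\<forall>i\<in>S. y i = x i"
    using k unfolding y_def by auto
  have "\<exists>i\<in>insert k S. y i \<noteq> 0"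
    using nz yS by auto
  then have "0 < quad_form A (insert k S) y"
    using pd unfolding pos_def_on_def by blast
  also have "quad_form A (insert k S) y = quad_form (schur_complement A k) S y"
    using quad_form_insert_schur[OF fin k sym, of y] akk yS by (simp add: y_def)
  also have "\<dots> = quad_form (schur_complement A k) S x"
    using yS by (rule quad_form_cong)
  finally show "0 < quad_form (schur_complement A k) S x" .
qed

lemma quad_form_plus_linear_bdd_below:
  assumes "finite S" "symmetric_on A S" "pos_def_on A S"
  shows "\<exists>M. \<forall>x. M \<le> quad_form A S x + (\<Sum>i\<in>S. c i * x i)"
  using assms
proof (induction S arbitrary: A c rule: finite_induct)
  case empty
  show ?case by (auto simp: quad_form_def)
next
  case (insert k S)
  define a where "a = A k k"
  have apos: "0 < a"
    unfolding a_def using pos_def_on_diag_pos[OF insert.prems(2)] insert.hyps(1) by simp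
  define c' where "c' j = c j - c k * A k j / a" for j
  obtain M where M: "\<And>x. M \<le> quad_form (schur_complement A k) S x + (\<Sum>i\<in>S. c' i * x i)"
    using insert.IH[OF symmetric_on_schur_complement[OF insert.prems(1)]
        pos_def_on_schur_complement[OF insert.hyps insert.prems]] by blast
  show ?case
  proof (intro exI allI)
    fix x
    define L where "L = (\<Sum>j\<in>S. A k j * x j)"
    define t where "t = x k + L / a"
    have lin: "(\<Sum>i\<in>S. c' i * x i) = (\<Sum>i\<in>S. c i * x i) - c k * L / a"
      unfolding c'_def L_def
      by (simp add: algebra_simps sum_subtractf sum_distrib_left sum_divide_distrib)
    have sq: "- ((c k)^2 / (4 * a)) \<le> a * t^2 + c k * t"
    proof -
      have "0 \<le> (2 * a * t + c k)^2 / (4 * a)"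
        using apos by simp
      also have "\<dots> = a * t^2 + c k * t + (c k)^2 / (4 * a)"
        using apos by (simp add: field_simps power2_eq_square)
      finally show ?thesis by simp
    qed
    have "quad_form A (insert k S) x + (\<Sum>i\<in>insert k S. c i * x i)
        = a * t^2 + c k * t + (quad_form (schur_complement A k) S x + (\<Sum>i\<in>S. c' i * x i))"
      using quad_form_insert_schur[OF insert.hyps insert.prems(1), of x] apos insert.hyps lin
      unfolding a_def[symmetric] L_def[symmetric] t_def by (simp add: algebra_simps)
    then show "- ((c k)^2 / (4 * a)) + M \<le> quad_form A (insert k S) x + (\<Sum>i\<in>insert k S. c i * x i)"
      using sq M[of x] by linarith
  qed
qed

section \<open>Rooted trees\<close>

lemma card_edges_ge_if_connected:
  fixes G :: "'a \<Rightarrow> 'a \<Rightarrow> bool"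
  assumes fin: "finite V" and r: "r \<in> V"
    and GV: "\<And>x y. G x y \<Longrightarrow> x \<in> V \<and> y \<in> V \<and> x \<noteq> y"
    and conn: "\<forall>x\<in>V. G\<^sup>*\<^sup>* x r"
  shows "card V - 1 \<le> card {{x, y} | x y. G x y}"
proof -
  \<comment> \<open>map each vertex \<open>x \<noteq> r\<close> to the first edge of a shortest path to \<open>r\<close>; distances make this injective\<close>
  define d where "d x = (LEAST k. (G ^^ k) x r)" for x
  have dist: "(G ^^ d x) x r" if "x \<in> V" for x
    using LeastI_ex[of "\<lambda>k. (G ^^ k) x r"] conn that rtranclp_imp_relpowp unfolding d_def by fast
  have "\<exists>y. G x y \<and> d y < d x" if x: "x \<in> V" "x \<noteq> r" for x
  proof -
    from dist[OF x(1)] x(2) obtain m where dm: "d x = Suc m" by (cases "d x") auto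
    with dist[OF x(1)] obtain y where y: "G x y" "(G ^^ m) y r" using relpowp_Suc_D2 by metis
    from y(2) have "d y \<le> m" unfolding d_def by (rule Least_le)
    with y dm show ?thesis by auto
  qed
  then obtain nx where nx: "\<And>x. x \<in> V \<Longrightarrow> x \<noteq> r \<Longrightarrow> G x (nx x) \<and> d (nx x) < d x"
    by metis
  have inj: "inj_on (\<lambda>x. {x, nx x}) (V - {r})"
  proof (rule inj_onI)
    fix x x' assume xs: "x \<in> V - {r}" "x' \<in> V - {r}" and eq: "{x, nx x} = {x', nx x'}"
    show "x = x'"
    proof (rule ccontr)
      assume "x \<noteq> x'"
      with eq have "x = nx x'" "x' = nx x" by (auto simp: doubleton_eq_iff)
      then show False using nx[of x] nx[of x'] xs by auto
    qed
  qed
  have "{{x, y} | x y. G x y} \<subseteq> Pow V" using GV by blast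
  then have "finite {{x, y} | x y. G x y}"
    using fin by (simp add: finite_subset)
  then have "card (V - {r}) \<le> card {{x, y} | x y. G x y}"
    using nx by (intro card_inj_on_le[OF inj]) blast+
  then show ?thesis using r fin by simp
qed

lemma sadjD: "sadj Q n x y \<Longrightarrow> x \<in> nodes n \<and> y \<in> nodes n \<and> x \<noteq> y"
  by (simp add: sadj_def)

lemma finite_sedges: "finite (sedges Q n)"
proof -
  have "sedges Q n \<subseteq> Pow (nodes n)" unfolding sedges_def using sadjD by blast
  then show ?thesis by (rule finite_subset) (simp add: nodes_def)
qed

lemma reach_in_nodes_iff: "reach_in Q n (nodes n) a b \<longleftrightarrow> (sadj Q n)\<^sup>*\<^sup>* a b"
proof -
  have "(\<lambda>x y. x \<in> nodes n \<and> y \<in> nodes n \<and> sadj Q n x y) = sadj Q n"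
    using sadjD by (intro ext) blast
  then show ?thesis by (simp add: reach_in_def)
qed

locale rooted_tree =
  fixes Q :: "nat \<Rightarrow> nat \<Rightarrow> real" and n :: nat
  assumes tree: "support_is_tree Q n"
    and topo: "topological_labeling Q n"
    and root_node: "n \<in> nodes n"
begin

abbreviation "adj \<equiv> sadj Q n"
abbreviation "V \<equiv> nodes n"

lemma finite_nodes: "finite V"
  by (simp add: nodes_def)

lemma reaches_root: "a \<in> V \<Longrightarrow> adj\<^sup>*\<^sup>* a n"
  using tree root_node
  unfolding support_is_tree_def connected_support_def reach_in_nodes_iff by blast

lemma card_sedges: "card (sedges Q n) = n - 1"
  using tree unfolding support_is_tree_def by blast

lemma not_connected_without_edge:
  assumes e: "adj a b"
  shows "\<not> (\<forall>x\<in>V. (\<lambda>x y. adj x y \<and> {x, y} \<noteq> {a, b})\<^sup>*\<^sup>* x n)"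
proof
  assume "\<forall>x\<in>V. (\<lambda>x y. adj x y \<and> {x, y} \<noteq> {a, b})\<^sup>*\<^sup>* x n"
  then have "card V - 1 \<le> card {{x, y} | x y. adj x y \<and> {x, y} \<noteq> {a, b}}"
    by (intro card_edges_ge_if_connected[OF finite_nodes root_node]) (use sadjD in blast)+
  also have "{{x, y} | x y. adj x y \<and> {x, y} \<noteq> {a, b}} = sedges Q n - {{a, b}}"
    unfolding sedges_def by blast
  also have "card \<dots> = n - 2"
  proof -
    have "{a, b} \<in> sedges Q n" using e unfolding sedges_def by blast
    then show ?thesis using card_sedges finite_sedges by simp
  qed
  finally show False
    using sadjD[OF e] by (auto simp: nodes_def)
qed

lemma child_candidate_exists:
  assumes a: "a \<in> V" "a \<noteq> n"
  shows "\<exists>v. adj a v \<and> reach_in Q n (V - {a}) v n"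
proof -
  have "(\<exists>v. adj a v \<and> reach_in Q n (V - {a}) v n) \<or> (x \<noteq> a \<and> reach_in Q n (V - {a}) x n)"
    if "adj\<^sup>*\<^sup>* x n" for x
    using that
  proof (induction rule: converse_rtranclp_induct)
    case base
    then show ?case using a by (simp add: reach_in_def)
  next
    case (step x y)
    show ?case
    proof (cases "\<exists>v. adj a v \<and> reach_in Q n (V - {a}) v n")
      case False
      with step.IH have y: "y \<noteq> a" "reach_in Q n (V - {a}) y n" by auto
      show ?thesis
      proof (cases "x = a")
        case True
        then show ?thesis using y step.hyps(1) by blast
      next
        case False
        then have "reach_in Q n (V - {a}) x n"
          using y step.hyps(1) sadjD unfolding reach_in_def
          by (blast intro: converse_rtranclp_into_rtranclp)
        then show ?thesis using False by blast
      qed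
    qed blast
  qed
  then show ?thesis using reaches_root[OF a(1)] by blast
qed

lemma child_candidate_unique:
  assumes a: "a \<in> V"
    and v1: "adj a v1" "reach_in Q n (V - {a}) v1 n"
    and v2: "adj a v2" "reach_in Q n (V - {a}) v2 n"
  shows "v1 = v2"
proof (rule ccontr)
  assume ne: "v1 \<noteq> v2"
  define G where "G x y \<longleftrightarrow> adj x y \<and> {x, y} \<noteq> {a, v1}" for x y
  have avoiding_a: "G\<^sup>*\<^sup>* v n" if "reach_in Q n (V - {a}) v n" for v
    using that unfolding reach_in_def
  proof (induction rule: rtranclp_induct)
    case (step y z)
    then have "G y z" unfolding G_def by (auto simp: doubleton_eq_iff)
    with step.IH show ?case by (rule rtranclp.rtrancl_into_rtrancl)
  qed simp
  have "G\<^sup>*\<^sup>* x n" if "adj\<^sup>*\<^sup>* x n" for x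
    using that
  proof (induction rule: converse_rtranclp_induct)
    case (step x y)
    show ?case
    proof (cases "{x, y} = {a, v1}")
      case False
      then have "G x y" using step.hyps(1) unfolding G_def by blast
      then show ?thesis using step.IH by (rule converse_rtranclp_into_rtranclp)
    next
      case True
      then consider "x = a" | "x = v1" "y = a" by (auto simp: doubleton_eq_iff)
      then show ?thesis
      proof cases
        case 1
        \<comment> \<open>the detour through the second candidate avoids the removed edge\<close>
        have "G a v2" using v2(1) ne sadjD unfolding G_def by (auto simp: doubleton_eq_iff)
        then show ?thesis using avoiding_a[OF v2(2)] 1 by (simp add: converse_rtranclp_into_rtranclp)
      qed (use avoiding_a[OF v1(2)] in simp)
    qed
  qed simp
  then show False
    using not_connected_without_edge[OF v1(1)] reaches_root unfolding G_def by blast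
qed

lemma sadj_child:
  assumes a: "a \<in> V" "a \<noteq> n"
  shows "adj a (child Q n a)"
proof -
  define P where "P v \<longleftrightarrow> adj a v \<and> (v = n \<or> reach_in Q n (V - {a}) v n)" for v
  have P_iff: "P v \<longleftrightarrow> adj a v \<and> reach_in Q n (V - {a}) v n" for v
    unfolding P_def reach_in_def by auto
  have "\<exists>!v. P v"
    using child_candidate_exists[OF a] child_candidate_unique[OF a(1)] unfolding P_iff by blast
  then have "P (THE v. P v)" by (rule theI')
  then show ?thesis unfolding child_def P_def by blast
qed

lemma child_in_nodes: "a \<in> V \<Longrightarrow> a \<noteq> n \<Longrightarrow> child Q n a \<in> V"
  using sadj_child sadjD by blast

lemma less_child: "a \<in> V \<Longrightarrow> a \<noteq> n \<Longrightarrow> a < child Q n a"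
  using topo unfolding topological_labeling_def by blast

lemma sadj_imp_child_edge:
  assumes "adj i j"
  shows "(i \<noteq> n \<and> j = child Q n i) \<or> (j \<noteq> n \<and> i = child Q n j)"
proof -
  \<comment> \<open>the \<open>n - 1\<close> child edges are distinct, hence they are all the edges of the tree\<close>
  define E where "E = (\<lambda>a. {a, child Q n a}) ` (V - {n})"
  have sub: "E \<subseteq> sedges Q n"
    unfolding E_def sedges_def using sadj_child by blast
  have "inj_on (\<lambda>a. {a, child Q n a}) (V - {n})"
  proof (rule inj_onI)
    fix x y assume xy: "x \<in> V - {n}" "y \<in> V - {n}" and eq: "{x, child Q n x} = {y, child Q n y}"
    show "x = y"
    proof (rule ccontr)
      assume "x \<noteq> y"
      with eq have "x = child Q n y" "y = child Q n x" by (auto simp: doubleton_eq_iff)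
      then show False using less_child[of x] less_child[of y] xy by auto
    qed
  qed
  then have "card E = card (V - {n})"
    unfolding E_def by (rule card_image)
  also have "\<dots> = n - 1"
    using root_node by (simp add: nodes_def)
  finally have "card E = n - 1" .
  then have "E = sedges Q n"
    using card_subset_eq[OF finite_sedges sub] card_sedges by simp
  moreover have "{i, j} \<in> sedges Q n"
    using assms unfolding sedges_def by blast
  ultimately obtain a where "a \<in> V - {n}" "{i, j} = {a, child Q n a}"
    unfolding E_def by blast
  then show ?thesis by (auto simp: doubleton_eq_iff)
qed

end

section \<open>Subtrees\<close>

context rooted_tree
begin

definition to_child :: "nat \<Rightarrow> nat \<Rightarrow> bool" where
  "to_child a b \<longleftrightarrow> a \<in> V \<and> a \<noteq> n \<and> b = child Q n a"

lemma supp_eq: "supp Q n u = {w \<in> V. to_child\<^sup>*\<^sup>* w u}"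
  unfolding supp_def to_child_def by simp

lemma to_child_rtranclp_le: "to_child\<^sup>*\<^sup>* w u \<Longrightarrow> w \<le> u"
  by (induction rule: rtranclp_induct) (auto simp: to_child_def dest: less_child)

lemma to_child_rtranclp_first_step:
  "to_child\<^sup>*\<^sup>* w u \<Longrightarrow> w \<noteq> u \<Longrightarrow> w \<in> V \<and> w \<noteq> n \<and> to_child\<^sup>*\<^sup>* (child Q n w) u"
  by (erule converse_rtranclpE) (auto simp: to_child_def)

lemma to_child_rtranclp_comparable:
  "to_child\<^sup>*\<^sup>* a b \<Longrightarrow> to_child\<^sup>*\<^sup>* a c \<Longrightarrow> to_child\<^sup>*\<^sup>* b c \<or> to_child\<^sup>*\<^sup>* c b"
proof (induction arbitrary: c rule: converse_rtranclp_induct)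
  case (step a a')
  show ?case
  proof (cases "a = c")
    case True
    then show ?thesis using step.hyps by (meson converse_rtranclp_into_rtranclp)
  next
    case False
    have "to_child\<^sup>*\<^sup>* a' c"
      using to_child_rtranclp_first_step[OF step.prems False] step.hyps(1) by (simp add: to_child_def)
    then show ?thesis using step.IH by blast
  qed
qed simp

lemma supp_subset_nodes: "supp Q n u \<subseteq> V"
  unfolding supp_eq by blast

lemma finite_supp: "finite (supp Q n u)"
  using supp_subset_nodes finite_nodes by (rule finite_subset)

lemma self_in_supp: "u \<in> V \<Longrightarrow> u \<in> supp Q n u"
  unfolding supp_eq by simp

lemma le_of_in_supp: "i \<in> supp Q n v \<Longrightarrow> i \<le> v"
  unfolding supp_eq using to_child_rtranclp_le by blast

lemma child_in_supp: "i \<in> supp Q n v \<Longrightarrow> i \<noteq> v \<Longrightarrow> i \<noteq> n \<and> child Q n i \<in> supp Q n v"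
  unfolding supp_eq using to_child_rtranclp_first_step child_in_nodes by blast

lemma finite_par: "finite (par Q n u)"
  using finite_nodes unfolding par_def by simp

lemma par_in_nodes: "v \<in> par Q n u \<Longrightarrow> v \<in> V"
  unfolding par_def by simp

lemma par_less: "v \<in> par Q n u \<Longrightarrow> v < u"
  unfolding par_def using less_child by auto

lemma supp_eq_insert_UN_par:
  assumes u: "u \<in> V"
  shows "supp Q n u = insert u (\<Union>v\<in>par Q n u. supp Q n v)"
proof (intro equalityI subsetI)
  fix w assume w: "w \<in> supp Q n u"
  show "w \<in> insert u (\<Union>v\<in>par Q n u. supp Q n v)"
  proof (cases "w = u")
    case False
    from w have "w \<in> V" "to_child\<^sup>*\<^sup>* w u" unfolding supp_eq by auto
    with False obtain y where "to_child\<^sup>*\<^sup>* w y" "to_child y u"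
      by (metis rtranclp.cases)
    with \<open>w \<in> V\<close> have "y \<in> par Q n u" "w \<in> supp Q n y"
      unfolding to_child_def par_def supp_eq by auto
    then show ?thesis by blast
  qed simp
next
  fix w assume "w \<in> insert u (\<Union>v\<in>par Q n u. supp Q n v)"
  moreover have "to_child v u" if "v \<in> par Q n u" for v
    using that unfolding par_def to_child_def by auto
  ultimately show "w \<in> supp Q n u"
    using u unfolding supp_eq by (auto intro: rtranclp.rtrancl_into_rtrancl)
qed

lemma notin_supp_par: "v \<in> par Q n u \<Longrightarrow> u \<notin> supp Q n v"
  using le_of_in_supp par_less by fastforce

lemma disjoint_supp_par:
  assumes v: "v \<in> par Q n u" and w: "w \<in> par Q n u" and ne: "v \<noteq> w"
  shows "supp Q n v \<inter> supp Q n w = {}"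
proof (rule ccontr)
  have not_below: False if "to_child\<^sup>*\<^sup>* x y" "x \<in> par Q n u" "y \<in> par Q n u" "x \<noteq> y" for x y
  proof -
    have "to_child\<^sup>*\<^sup>* u y"
      using to_child_rtranclp_first_step[OF that(1,4)] that(2) unfolding par_def by simp
    then show False using to_child_rtranclp_le par_less[OF that(3)] by fastforce
  qed
  assume "supp Q n v \<inter> supp Q n w \<noteq> {}"
  then obtain i where "to_child\<^sup>*\<^sup>* i v" "to_child\<^sup>*\<^sup>* i w" unfolding supp_eq by blast
  then have "to_child\<^sup>*\<^sup>* v w \<or> to_child\<^sup>*\<^sup>* w v" by (rule to_child_rtranclp_comparable)
  then show False using not_below v w ne by metis
qed

lemma Q_eq_0_if_not_child_edge:
  assumes "i \<in> V" "j \<in> V" "i \<noteq> j"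
    and "\<not> (i \<noteq> n \<and> j = child Q n i)" "\<not> (j \<noteq> n \<and> i = child Q n j)"
  shows "Q i j = 0"
  using assms sadj_imp_child_edge unfolding sadj_def by blast

lemma Q_par_eq_0:
  assumes w: "w \<in> par Q n u" and j: "j \<in> supp Q n w" "j \<noteq> w"
  shows "Q u j = 0"
proof (rule Q_eq_0_if_not_child_edge)
  have ju: "j < u" using le_of_in_supp[OF j(1)] par_less[OF w] by simp
  show "u \<in> V" "j \<in> V" "u \<noteq> j"
    using w j(1) ju supp_subset_nodes child_in_nodes unfolding par_def by auto
  show "\<not> (u \<noteq> n \<and> j = child Q n u)"
    using less_child[OF \<open>u \<in> V\<close>] ju by auto
  show "\<not> (j \<noteq> n \<and> u = child Q n j)"
  proof
    assume "j \<noteq> n \<and> u = child Q n j"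
    then have "j \<in> par Q n u" using \<open>j \<in> V\<close> unfolding par_def by simp
    then show False using disjoint_supp_par[OF _ w j(2)] self_in_supp[OF \<open>j \<in> V\<close>] j(1) by blast
  qed
qed

lemma Q_supp_par_eq_0:
  assumes v: "v \<in> par Q n u" and w: "w \<in> par Q n u" and ne: "v \<noteq> w"
    and i: "i \<in> supp Q n v" and j: "j \<in> supp Q n w"
  shows "Q i j = 0"
proof -
  \<comment> \<open>a child edge leaving the subtree of one parent ends at \<open>u\<close>, which lies in no such subtree\<close>
  have no_edge: False
    if "v' \<in> par Q n u" "w' \<in> par Q n u" "v' \<noteq> w'" "i' \<in> supp Q n v'" "j' \<in> supp Q n w'"
      "i' \<noteq> n" "j' = child Q n i'" for v' w' i' j'
  proof (cases "i' = v'")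
    case True
    then have "j' = u" using that(1,7) unfolding par_def by simp
    then show False using le_of_in_supp[OF that(5)] par_less[OF that(2)] by simp
  next
    case False
    then have "j' \<in> supp Q n v'" using child_in_supp[OF that(4)] that(7) by simp
    then show False using disjoint_supp_par[OF that(1-3)] that(5) by blast
  qed
  show ?thesis
  proof (rule Q_eq_0_if_not_child_edge)
    show "i \<in> V" "j \<in> V" "i \<noteq> j"
      using i j disjoint_supp_par[OF v w ne] supp_subset_nodes by blast+
    show "\<not> (i \<noteq> n \<and> j = child Q n i)" "\<not> (j \<noteq> n \<and> i = child Q n j)"
      using no_edge[OF v w ne i j] no_edge[OF w v ne[symmetric] j i] by blast+
  qed
qed

end

section \<open>Separable costs\<close>

definition feasible :: "'a set \<Rightarrow> (('a \<Rightarrow> real) \<times> ('a \<Rightarrow> real)) set" where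
  "feasible S = {(x, z). \<forall>i\<in>S. z i \<in> {0, 1} \<and> x i * (1 - z i) = 0}"

definition cost :: "('a \<Rightarrow> 'a \<Rightarrow> real) \<Rightarrow> ('a \<Rightarrow> real) \<Rightarrow> ('a \<Rightarrow> real) \<Rightarrow> 'a set
    \<Rightarrow> ('a \<Rightarrow> real) \<times> ('a \<Rightarrow> real) \<Rightarrow> real" where
  "cost Q c lam S p =
     (1/2) * quad_form Q S (fst p) + (\<Sum>i\<in>S. c i * fst p i) + (\<Sum>i\<in>S. lam i * snd p i)"

lemma fcost_eq_INF_cost:
  "fcost Q c lam n u \<alpha> =
     (INF p \<in> {p \<in> feasible (supp Q n u). fst p u = \<alpha>}. cost Q c lam (supp Q n u) p)"
  unfolding fcost_def cost_def quad_form_def feasible_def by (rule arg_cong[where f = Inf]) force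

lemma in_feasible_iff:
  "p \<in> feasible S \<longleftrightarrow> (\<forall>i\<in>S. snd p i \<in> {0, 1} \<and> fst p i * (1 - snd p i) = 0)"
  unfolding feasible_def by (simp add: case_prod_beta)

lemma feasible_antimono: "S \<subseteq> T \<Longrightarrow> feasible T \<subseteq> feasible S"
  unfolding feasible_def by blast

lemma const_in_feasible: "(\<lambda>_. \<alpha>, \<lambda>_. 1) \<in> feasible S"
  unfolding feasible_def by simp

lemma cost_cong:
  "\<forall>i\<in>S. fst p i = fst p' i \<and> snd p i = snd p' i \<Longrightarrow> cost Q c lam S p = cost Q c lam S p'"
  unfolding cost_def using quad_form_cong[of S "fst p" "fst p'"] by simp

lemma le_sum_INF_if_le_sum_choices:
  fixes f :: "'i \<Rightarrow> 'a \<Rightarrow> real"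
  assumes "finite P" "\<forall>v\<in>P. B v \<noteq> {}"
    and "\<forall>p. (\<forall>v\<in>P. p v \<in> B v) \<longrightarrow> m \<le> (\<Sum>v\<in>P. f v (p v))"
  shows "m \<le> (\<Sum>v\<in>P. INF b \<in> B v. f v b)"
  using assms
proof (induction P arbitrary: m rule: finite_induct)
  case empty
  then show ?case by auto
next
  case (insert k P)
  have "m - f k b \<le> (\<Sum>v\<in>P. INF b \<in> B v. f v b)" if b: "b \<in> B k" for b
  proof (rule insert.IH)
    show "\<forall>p. (\<forall>v\<in>P. p v \<in> B v) \<longrightarrow> m - f k b \<le> (\<Sum>v\<in>P. f v (p v))"
    proof (intro allI impI)
      fix p assume "\<forall>v\<in>P. p v \<in> B v"
      then have "m \<le> (\<Sum>v\<in>insert k P. f v ((p(k := b)) v))"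
        using insert.prems(2) b by auto
      also have "\<dots> = f k b + (\<Sum>v\<in>P. f v (p v))"
        using insert.hyps by (auto intro!: sum.cong)
      finally show "m - f k b \<le> (\<Sum>v\<in>P. f v (p v))" by simp
    qed
  qed (use insert.prems in auto)
  then have "m - (\<Sum>v\<in>P. INF b \<in> B v. f v b) \<le> (INF b \<in> B k. f k b)"
    using insert.prems(1) by (intro cINF_greatest) force+
  then show ?case
    using insert.hyps by simp
qed

lemma sum_eq_single:
  assumes "finite A" "a \<in> A" "\<forall>j\<in>A - {a}. g j = 0"
  shows "sum g A = g a"
  using assms by (simp add: sum.remove)

locale tree_cost = rooted_tree +
  fixes c lam :: "nat \<Rightarrow> real"
  assumes sym: "symmetric_on Q V"
    and posdef: "pos_def_on Q V"
    and lam_pos: "\<forall>i\<in>V. 0 < lam i"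
begin

abbreviation "S \<equiv> supp Q n"
abbreviation "C \<equiv> cost Q c lam"

lemma cost_plus_linear_bdd_below:
  assumes v: "v \<in> V"
  shows "\<exists>M. \<forall>p\<in>feasible (S v). M \<le> \<gamma> * fst p v + C (S v) p"
proof -
  define c' where "c' i = 2 * c i + (if i = v then 2 * \<gamma> else 0)" for i
  have "symmetric_on Q (S v)"
    using sym supp_subset_nodes unfolding symmetric_on_def by blast
  moreover have "pos_def_on Q (S v)"
    using posdef finite_nodes supp_subset_nodes by (rule pos_def_on_subset)
  ultimately obtain M where M: "\<forall>x. M \<le> quad_form Q (S v) x + (\<Sum>i\<in>S v. c' i * x i)"
    using quad_form_plus_linear_bdd_below[OF finite_supp] by blast
  have "M / 2 \<le> \<gamma> * fst p v + C (S v) p" if p: "p \<in> feasible (S v)" for p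
  proof -
    have lin: "(\<Sum>i\<in>S v. c' i * fst p i) = 2 * (\<Sum>i\<in>S v. c i * fst p i) + 2 * \<gamma> * fst p v"
      using finite_supp self_in_supp[OF v]
      by (simp add: c'_def distrib_right sum.distrib sum_distrib_left mult.assoc
          if_distrib[of "\<lambda>a. a * _"] cong: if_cong)
    have "0 \<le> lam i * snd p i" if "i \<in> S v" for i
    proof -
      have "0 < lam i" "snd p i \<in> {0, 1}"
        using that p lam_pos supp_subset_nodes unfolding in_feasible_iff by auto
      then show ?thesis by auto
    qed
    then have "0 \<le> (\<Sum>i\<in>S v. lam i * snd p i)"
      by (rule sum_nonneg)
    then show ?thesis
      using M[rule_format, of "fst p"] lin unfolding cost_def by linarith
  qed
  then show ?thesis by blast
qed

definition branch_inf :: "nat \<Rightarrow> real \<Rightarrow> real" where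
  "branch_inf v \<gamma> = (INF p \<in> feasible (S v). \<gamma> * fst p v + C (S v) p)"

lemma branch_inf_le:
  assumes "v \<in> V" "p \<in> feasible (S v)"
  shows "branch_inf v \<gamma> \<le> \<gamma> * fst p v + C (S v) p"
  unfolding branch_inf_def using cost_plus_linear_bdd_below[OF assms(1), of \<gamma>] assms(2)
  by (intro cINF_lower) (auto simp: bdd_below_def)

lemma fconj_eq_neg_branch_inf:
  assumes v: "v \<in> V"
  shows "fconj Q c lam n v (- \<gamma>) = - branch_inf v \<gamma>"
proof -
  define g where "g p = \<gamma> * fst p v + C (S v) p" for p
  define F where "F \<xi> = {p \<in> feasible (S v). fst p v = \<xi>}" for \<xi>
  obtain M where M: "\<forall>p\<in>feasible (S v). M \<le> g p"
    using cost_plus_linear_bdd_below[OF v] unfolding g_def by blast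
  have F_ne: "F \<xi> \<noteq> {}" for \<xi>
    using const_in_feasible unfolding F_def by fastforce
  have fibre: "\<gamma> * \<xi> + fcost Q c lam n v \<xi> = (INF p \<in> F \<xi>. g p)" for \<xi>
  proof -
    have "bdd_below (C (S v) ` F \<xi>)"
      using M unfolding F_def g_def bdd_below_def by (intro exI[of _ "M - \<gamma> * \<xi>"]) force
    then have "\<gamma> * \<xi> + fcost Q c lam n v \<xi> = (INF p \<in> F \<xi>. \<gamma> * \<xi> + C (S v) p)"
      unfolding fcost_eq_INF_cost F_def[symmetric] by (rule Inf_add_eq[symmetric, OF _ F_ne])
    also have "\<dots> = (INF p \<in> F \<xi>. g p)"
      by (rule INF_cong) (simp_all add: F_def g_def)
    finally show ?thesis .
  qed
  have lower: "M \<le> \<gamma> * \<xi> + fcost Q c lam n v \<xi>" for \<xi>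
    unfolding fibre using M F_ne unfolding F_def by (intro cINF_greatest) auto
  have "feasible (S v) = (\<Union>\<xi>. F \<xi>)"
    unfolding F_def by auto
  moreover have "bdd_below (\<Union>\<xi>. g ` F \<xi>)"
    using M unfolding F_def bdd_below_def by blast
  ultimately have "(INF p \<in> feasible (S v). g p) = (INF \<xi>. INF p \<in> F \<xi>. g p)"
    using cINF_UNION[of UNIV F g] F_ne by simp
  also have "\<dots> = (INF \<xi>. \<gamma> * \<xi> + fcost Q c lam n v \<xi>)"
    by (simp add: fibre)
  also have "\<dots> = - (SUP \<xi>. - (\<gamma> * \<xi> + fcost Q c lam n v \<xi>))"
    using lower by (subst uminus_cINF[symmetric]) (auto simp: bdd_below_def)
  also have "\<dots> = - fconj Q c lam n v (- \<gamma>)"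
    unfolding fconj_def by simp
  finally show ?thesis unfolding branch_inf_def g_def by simp
qed

lemma sum_supp_eq_sum_par:
  assumes u: "u \<in> V"
  shows "sum f (S u) = f u + (\<Sum>v\<in>par Q n u. sum f (S v))"
proof -
  have "u \<notin> (\<Union>v\<in>par Q n u. S v)"
    using notin_supp_par by blast
  then have "sum f (S u) = f u + sum f (\<Union>v\<in>par Q n u. S v)"
    unfolding supp_eq_insert_UN_par[OF u] by (simp add: finite_par finite_supp)
  also have "sum f (\<Union>v\<in>par Q n u. S v) = (\<Sum>v\<in>par Q n u. sum f (S v))"
    using finite_par finite_supp disjoint_supp_par by (intro sum.UNION_disjoint) auto
  finally show ?thesis .
qed

lemma row_sum_supp_root:
  assumes u: "u \<in> V"
  shows "(\<Sum>j\<in>S u. Q u j * x j) = Q u u * x u + (\<Sum>v\<in>par Q n u. Q u v * x v)"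
proof -
  have "(\<Sum>j\<in>S v. Q u j * x j) = Q u v * x v" if v: "v \<in> par Q n u" for v
    using finite_supp self_in_supp[OF par_in_nodes[OF v]] Q_par_eq_0[OF v]
    by (intro sum_eq_single) auto
  then show ?thesis
    unfolding sum_supp_eq_sum_par[OF u] by simp
qed

lemma row_sum_supp_par:
  assumes u: "u \<in> V" and v: "v \<in> par Q n u" and i: "i \<in> S v"
  shows "(\<Sum>j\<in>S u. Q i j * x j) = Q i u * x u + (\<Sum>j\<in>S v. Q i j * x j)"
proof -
  have "(\<Sum>j\<in>S w. Q i j * x j) = 0" if "w \<in> par Q n u - {v}" for w
    using Q_supp_par_eq_0[OF v _ _ i, of w] that by simp
  then have "(\<Sum>w\<in>par Q n u. \<Sum>j\<in>S w. Q i j * x j) = (\<Sum>j\<in>S v. Q i j * x j)"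
    using finite_par v by (intro sum_eq_single) auto
  then show ?thesis
    unfolding sum_supp_eq_sum_par[OF u] by simp
qed

lemma col_sum_supp_par:
  assumes u: "u \<in> V" and v: "v \<in> par Q n u"
  shows "(\<Sum>i\<in>S v. x i * Q i u) = Q u v * x v"
proof -
  have "Q i u = Q u i" if "i \<in> S v" for i
    using sym u that supp_subset_nodes unfolding symmetric_on_def by blast
  then have "(\<Sum>i\<in>S v. x i * Q i u) = (\<Sum>i\<in>S v. Q u i * x i)"
    by (intro sum.cong) auto
  also have "\<dots> = Q u v * x v"
    using finite_supp self_in_supp[OF par_in_nodes[OF v]] Q_par_eq_0[OF v]
    by (intro sum_eq_single) auto
  finally show ?thesis .
qed

lemma quad_form_supp_eq:
  assumes u: "u \<in> V"
  shows "quad_form Q (S u) x = Q u u * (x u)^2 + 2 * (\<Sum>v\<in>par Q n u. Q u v * x u * x v)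
    + (\<Sum>v\<in>par Q n u. quad_form Q (S v) x)"
proof -
  have rows: "quad_form Q T x = (\<Sum>i\<in>T. x i * (\<Sum>j\<in>T. Q i j * x j))" for T
    unfolding quad_form_def by (simp add: sum_distrib_left mult.assoc)
  have branch: "(\<Sum>i\<in>S v. x i * (\<Sum>j\<in>S u. Q i j * x j)) = Q u v * x u * x v + quad_form Q (S v) x"
    if v: "v \<in> par Q n u" for v
  proof -
    have "(\<Sum>i\<in>S v. x i * (\<Sum>j\<in>S u. Q i j * x j))
        = (\<Sum>i\<in>S v. x i * Q i u) * x u + (\<Sum>i\<in>S v. x i * (\<Sum>j\<in>S v. Q i j * x j))"
      using row_sum_supp_par[OF u v]
      by (simp add: distrib_left sum.distrib sum_distrib_right mult.assoc)
    then show ?thesis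
      unfolding col_sum_supp_par[OF u v] rows by simp
  qed
  have "quad_form Q (S u) x = (\<Sum>i\<in>S u. x i * (\<Sum>j\<in>S u. Q i j * x j))"
    by (rule rows)
  also have "\<dots> = x u * (\<Sum>j\<in>S u. Q u j * x j)
      + (\<Sum>v\<in>par Q n u. \<Sum>i\<in>S v. x i * (\<Sum>j\<in>S u. Q i j * x j))"
    by (rule sum_supp_eq_sum_par[OF u])
  also have "\<dots> = x u * (Q u u * x u + (\<Sum>v\<in>par Q n u. Q u v * x v))
      + (\<Sum>v\<in>par Q n u. Q u v * x u * x v + quad_form Q (S v) x)"
    unfolding row_sum_supp_root[OF u] using branch by simp
  finally show ?thesis
    by (simp add: sum.distrib distrib_left sum_distrib_left power2_eq_square mult_ac)
qed

lemma cost_supp_eq: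
  assumes u: "u \<in> V"
  shows "C (S u) p = (1/2) * Q u u * (fst p u)^2 + c u * fst p u + lam u * snd p u
    + (\<Sum>v\<in>par Q n u. Q u v * fst p u * fst p v + C (S v) p)"
  unfolding cost_def quad_form_supp_eq[OF u] sum_supp_eq_sum_par[OF u, of "\<lambda>i. c i * fst p i"]
    sum_supp_eq_sum_par[OF u, of "\<lambda>i. lam i * snd p i"]
  by (simp add: sum.distrib sum_distrib_left algebra_simps)

lemma glue_feasible:
  assumes u: "u \<in> V" and p: "\<forall>v\<in>par Q n u. p v \<in> feasible (S v)"
  obtains q where "q \<in> feasible (S u)" "fst q u = \<alpha>" "snd q u = indic \<alpha>"
    "\<forall>v\<in>par Q n u. \<forall>i\<in>S v. fst q i = fst (p v) i \<and> snd q i = snd (p v) i"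
proof -
  define owner where "owner i = (THE v. v \<in> par Q n u \<and> i \<in> S v)" for i
  have owner: "owner i = v" if "v \<in> par Q n u" "i \<in> S v" for i v
    unfolding owner_def using that disjoint_supp_par by (intro the_equality) blast+
  define q where "q = ((\<lambda>i. if i = u then \<alpha> else fst (p (owner i)) i),
                        (\<lambda>i. if i = u then indic \<alpha> else snd (p (owner i)) i))"
  have agree: "\<forall>v\<in>par Q n u. \<forall>i\<in>S v. fst q i = fst (p v) i \<and> snd q i = snd (p v) i"
    using owner notin_supp_par unfolding q_def by fastforce
  have "snd q i \<in> {0, 1} \<and> fst q i * (1 - snd q i) = 0" if "i \<in> S u" for i
  proof -
    from that consider "i = u" | v where "v \<in> par Q n u" "i \<in> S v"
      using supp_eq_insert_UN_par[OF u] by blast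
    then show ?thesis
    proof cases
      case 1
      then show ?thesis unfolding q_def indic_def by simp
    next
      case 2
      then show ?thesis using agree p unfolding in_feasible_iff by fastforce
    qed
  qed
  then have "q \<in> feasible (S u)"
    unfolding in_feasible_iff by blast
  moreover have "fst q u = \<alpha>" "snd q u = indic \<alpha>"
    unfolding q_def by simp_all
  ultimately show ?thesis
    using agree that by blast
qed

lemma fcost_ge_recurrence:
  assumes u: "u \<in> V"
  shows "(1/2) * Q u u * \<alpha>^2 + c u * \<alpha> + lam u * indic \<alpha>
      + (\<Sum>v\<in>par Q n u. branch_inf v (Q u v * \<alpha>)) \<le> fcost Q c lam n u \<alpha>"
proof -
  have "(1/2) * Q u u * \<alpha>^2 + c u * \<alpha> + lam u * indic \<alpha>
      + (\<Sum>v\<in>par Q n u. branch_inf v (Q u v * \<alpha>)) \<le> C (S u) q"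
    if q: "q \<in> feasible (S u)" "fst q u = \<alpha>" for q
  proof -
    have "lam u * indic \<alpha> \<le> lam u * snd q u"
      using q lam_pos u self_in_supp[OF u] unfolding in_feasible_iff indic_def by auto
    moreover have "branch_inf v (Q u v * \<alpha>) \<le> Q u v * fst q u * fst q v + C (S v) q"
      if v: "v \<in> par Q n u" for v
    proof -
      have "S v \<subseteq> S u"
        using supp_eq_insert_UN_par[OF u] v by blast
      then show ?thesis
        using branch_inf_le[OF par_in_nodes[OF v]] q feasible_antimono by blast
    qed
    then have "(\<Sum>v\<in>par Q n u. branch_inf v (Q u v * \<alpha>))
        \<le> (\<Sum>v\<in>par Q n u. Q u v * fst q u * fst q v + C (S v) q)"
      by (rule sum_mono)
    ultimately show ?thesis
      unfolding cost_supp_eq[OF u] q(2) by linarith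
  qed
  moreover have "{p \<in> feasible (S u). fst p u = \<alpha>} \<noteq> {}"
    using const_in_feasible by fastforce
  ultimately show ?thesis
    unfolding fcost_eq_INF_cost by (intro cINF_greatest) auto
qed

lemma fcost_le_recurrence:
  assumes u: "u \<in> V"
  shows "fcost Q c lam n u \<alpha> \<le> (1/2) * Q u u * \<alpha>^2 + c u * \<alpha> + lam u * indic \<alpha>
      + (\<Sum>v\<in>par Q n u. branch_inf v (Q u v * \<alpha>))"
proof -
  define K where "K = (1/2) * Q u u * \<alpha>^2 + c u * \<alpha> + lam u * indic \<alpha>"
  have choices: "fcost Q c lam n u \<alpha> - K
      \<le> (\<Sum>v\<in>par Q n u. Q u v * \<alpha> * fst (p v) v + C (S v) (p v))"
    if p: "\<forall>v\<in>par Q n u. p v \<in> feasible (S v)" for p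
  proof -
    obtain q where q: "q \<in> feasible (S u)" "fst q u = \<alpha>" "snd q u = indic \<alpha>"
      and agree: "\<forall>v\<in>par Q n u. \<forall>i\<in>S v. fst q i = fst (p v) i \<and> snd q i = snd (p v) i"
      using glue_feasible[OF u p] by blast
    have bdd: "bdd_below (C (S u) ` {p \<in> feasible (S u). fst p u = \<alpha>})"
      using cost_plus_linear_bdd_below[OF u, of 0] unfolding bdd_below_def by auto
    have branch: "Q u v * \<alpha> * fst q v + C (S v) q = Q u v * \<alpha> * fst (p v) v + C (S v) (p v)"
      if v: "v \<in> par Q n u" for v
      using agree v self_in_supp[OF par_in_nodes[OF v]] cost_cong[of "S v" q "p v"] by simp
    have "fcost Q c lam n u \<alpha> \<le> C (S u) q"
      unfolding fcost_eq_INF_cost using q(1,2) by (intro cINF_lower[OF bdd]) simp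
    also have "C (S u) q = K + (\<Sum>v\<in>par Q n u. Q u v * \<alpha> * fst (p v) v + C (S v) (p v))"
      unfolding cost_supp_eq[OF u] q(2,3) K_def using branch by simp
    finally show ?thesis by simp
  qed
  have "fcost Q c lam n u \<alpha> - K \<le> (\<Sum>v\<in>par Q n u. branch_inf v (Q u v * \<alpha>))"
    unfolding branch_inf_def using const_in_feasible choices
    by (intro le_sum_INF_if_le_sum_choices[OF finite_par]) blast+
  then show ?thesis
    unfolding K_def by simp
qed

end

theorem mainTheorem3:
  fixes Q :: "nat \<Rightarrow> nat \<Rightarrow> real" and c lam :: "nat \<Rightarrow> real" and n :: nat
  assumes sym: "\<forall>i\<in>nodes n. \<forall>j\<in>nodes n. Q i j = Q j i"
    and posdef: "\<forall>x :: nat \<Rightarrow> real. (\<exists>i\<in>nodes n. x i \<noteq> 0) \<longrightarrow>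
                   (\<Sum>i\<in>nodes n. \<Sum>j\<in>nodes n. x i * Q i j * x j) > 0"
    and diag: "\<forall>i\<in>nodes n. Q i i = 1"
    and tree: "support_is_tree Q n"
    and topo: "topological_labeling Q n"
    and lam_pos: "\<forall>i\<in>nodes n. lam i > 0"
  shows "\<forall>u\<in>nodes n. \<forall>\<alpha>::real.
           fcost Q c lam n u \<alpha> =
             (1/2) * Q u u * \<alpha>^2 + c u * \<alpha> + lam u * indic \<alpha>
             - (\<Sum>v\<in>par Q n u. fconj Q c lam n v (- Q u v * \<alpha>))"
proof (intro ballI allI)
  \<comment> \<open>the unit diagonal \<open>diag\<close> is a normalisation that the recurrence does not need\<close>
  fix u \<alpha> assume u: "u \<in> nodes n"
  interpret tree_cost Q n c lam
    using sym posdef tree topo lam_pos u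
    by unfold_locales (auto simp: symmetric_on_def pos_def_on_def quad_form_def nodes_def)
  have "fconj Q c lam n v (- Q u v * \<alpha>) = - branch_inf v (Q u v * \<alpha>)" if "v \<in> par Q n u" for v
    using fconj_eq_neg_branch_inf[OF par_in_nodes[OF that], of "Q u v * \<alpha>"] by simp
  then have "(\<Sum>v\<in>par Q n u. fconj Q c lam n v (- Q u v * \<alpha>))
      = - (\<Sum>v\<in>par Q n u. branch_inf v (Q u v * \<alpha>))"
    by (simp add: sum_negf)
  then show "fcost Q c lam n u \<alpha> = (1/2) * Q u u * \<alpha>^2 + c u * \<alpha> + lam u * indic \<alpha>
      - (\<Sum>v\<in>par Q n u. fconj Q c lam n v (- Q u v * \<alpha>))"
    using order_antisym[OF fcost_le_recurrence[OF u] fcost_ge_recurrence[OF u]] by simp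
qed

end
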